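(* Let $\mathcal C$ be a category with a class of cofibrations and a class of fibrations such that every map from a cofibrant object to a fibrant object factors both as a cofibration followed by an acyclic fibration and as an acyclic cofibration followed by a fibration. The following conditions are equivalent: (i) for any bifibrant object $A$ and any factorization $\mathrm{Id}_A\colon A\hookrightarrow B\to A$ of the identity as a cofibration followed by an acyclic fibration, the cofibration is acyclic; (ii) there is a class $\mathcal F$ of acyclic fibrations such that any map from a cofibrant object to a fibrant object factors as a cofibration followed by a map in $\mathcal F$, and condition (i) holds for those factorizations whose acyclic fibration part is in $\mathcal F$; (iii) any cofibration $A\hookrightarrow B$ with $A$ cofibrant and $B$ fibrant admits a relative cylinder object; (iv) any cofibration $A\hookrightarrow B$ between bifibrant objects admits a relative cylinder object.
   Context: A class of cofibrations: a class of maps with a cofibrant initial object $0$ ($X$ cofibrant iff $0\to X$ is a cofibration), containing isomorphisms with cofibrant domain, closed under composition, and such that pushouts of a cofibration $A\to B$ along $A\to C$ with $A,C$ cofibrant exist and $C\to C\sqcup_AB$ is a cofibration; a class of fibrations is the dual notion (fibrant objects dually). Bifibrant = fibrant and cofibrant. Acyclic fibration: fibration with the right lifting property against all cofibrations between cofibrant objects; acyclic cofibration: cofibration with the left lifting property against all fibrations between fibrant objects. A relative (strong) cylinder object for a cofibration $A\to B$ is a factorization $B\sqcup_AB\to I_AB\to B$ of the codiagonal whose first map is a cofibration and whose restriction along the first inclusion $B\to B\sqcup_AB$ is an acyclic cofibration. *)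

theory Defs
  imports Main
begin

record ('o, 'a) cat =
  Ob   :: "'o set"
  Ar   :: "'a set"
  Dom  :: "'a \<Rightarrow> 'o"
  Cod  :: "'a \<Rightarrow> 'o"
  Idn  :: "'o \<Rightarrow> 'a"
  Comp :: "'a \<Rightarrow> 'a \<Rightarrow> 'a"   (* Comp C g f = g \<circ> f *)

definition hom :: "('o,'a) cat \<Rightarrow> 'a \<Rightarrow> 'o \<Rightarrow> 'o \<Rightarrow> bool" where
  "hom C f X Y \<longleftrightarrow> f \<in> Ar C \<and> Dom C f = X \<and> Cod C f = Y"

definition is_category :: "('o,'a) cat \<Rightarrow> bool" where
  "is_category C \<longleftrightarrow>
     (\<forall>f\<in>Ar C. Dom C f \<in> Ob C \<and> Cod C f \<in> Ob C) \<and>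
     (\<forall>X\<in>Ob C. hom C (Idn C X) X X) \<and>
     (\<forall>f g. f \<in> Ar C \<and> g \<in> Ar C \<and> Cod C f = Dom C g \<longrightarrow>
        hom C (Comp C g f) (Dom C f) (Cod C g)) \<and>
     (\<forall>f\<in>Ar C. Comp C f (Idn C (Dom C f)) = f \<and> Comp C (Idn C (Cod C f)) f = f) \<and>
     (\<forall>f g h. f \<in> Ar C \<and> g \<in> Ar C \<and> h \<in> Ar C \<and> Cod C f = Dom C g \<and> Cod C g = Dom C h \<longrightarrow>
        Comp C h (Comp C g f) = Comp C (Comp C h g) f)"

definition is_iso :: "('o,'a) cat \<Rightarrow> 'a \<Rightarrow> bool" where
  "is_iso C f \<longleftrightarrow> f \<in> Ar C \<and> (\<exists>g. hom C g (Cod C f) (Dom C f) \<and>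
      Comp C g f = Idn C (Dom C f) \<and> Comp C f g = Idn C (Cod C f))"

definition is_initial :: "('o,'a) cat \<Rightarrow> 'o \<Rightarrow> bool" where
  "is_initial C z \<longleftrightarrow> z \<in> Ob C \<and> (\<forall>X\<in>Ob C. \<exists>!f. hom C f z X)"

definition is_terminal :: "('o,'a) cat \<Rightarrow> 'o \<Rightarrow> bool" where
  "is_terminal C t \<longleftrightarrow> t \<in> Ob C \<and> (\<forall>X\<in>Ob C. \<exists>!f. hom C f X t)"

definition is_pushout :: "('o,'a) cat \<Rightarrow> 'a \<Rightarrow> 'a \<Rightarrow> 'a \<Rightarrow> 'a \<Rightarrow> bool" where
  "is_pushout C f g i j \<longleftrightarrow>
     f \<in> Ar C \<and> g \<in> Ar C \<and> Dom C f = Dom C g \<and>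
     hom C i (Cod C g) (Cod C i) \<and> hom C j (Cod C f) (Cod C i) \<and>
     Comp C i g = Comp C j f \<and>
     (\<forall>u v Q. hom C u (Cod C g) Q \<and> hom C v (Cod C f) Q \<and> Comp C u g = Comp C v f \<longrightarrow>
        (\<exists>!w. hom C w (Cod C i) Q \<and> Comp C w i = u \<and> Comp C w j = v))"

definition is_pullback :: "('o,'a) cat \<Rightarrow> 'a \<Rightarrow> 'a \<Rightarrow> 'a \<Rightarrow> 'a \<Rightarrow> bool" where
  "is_pullback C f g i j \<longleftrightarrow>
     f \<in> Ar C \<and> g \<in> Ar C \<and> Cod C f = Cod C g \<and>
     hom C i (Dom C i) (Dom C g) \<and> hom C j (Dom C i) (Dom C f) \<and>
     Comp C g i = Comp C f j \<and>
     (\<forall>u v Q. hom C u Q (Dom C g) \<and> hom C v Q (Dom C f) \<and> Comp C g u = Comp C f v \<longrightarrow>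
        (\<exists>!w. hom C w Q (Dom C i) \<and> Comp C i w = u \<and> Comp C j w = v))"

definition the_from :: "('o,'a) cat \<Rightarrow> 'o \<Rightarrow> 'o \<Rightarrow> 'a" where
  "the_from C z X = (THE f. hom C f z X)"

definition the_to :: "('o,'a) cat \<Rightarrow> 'o \<Rightarrow> 'o \<Rightarrow> 'a" where
  "the_to C t X = (THE f. hom C f X t)"

definition cofibrant :: "('o,'a) cat \<Rightarrow> 'a set \<Rightarrow> 'o \<Rightarrow> 'o \<Rightarrow> bool" where
  "cofibrant C Cof z X \<longleftrightarrow> X \<in> Ob C \<and> the_from C z X \<in> Cof"

definition fibrant :: "('o,'a) cat \<Rightarrow> 'a set \<Rightarrow> 'o \<Rightarrow> 'o \<Rightarrow> bool" where
  "fibrant C Fib t X \<longleftrightarrow> X \<in> Ob C \<and> the_to C t X \<in> Fib"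

definition cofib_class :: "('o,'a) cat \<Rightarrow> 'a set \<Rightarrow> 'o \<Rightarrow> bool" where
  "cofib_class C Cof z \<longleftrightarrow>
     Cof \<subseteq> Ar C \<and> is_initial C z \<and> cofibrant C Cof z z \<and>
     (\<forall>f. is_iso C f \<and> cofibrant C Cof z (Dom C f) \<longrightarrow> f \<in> Cof) \<and>
     (\<forall>f g. f \<in> Cof \<and> g \<in> Cof \<and> Cod C f = Dom C g \<longrightarrow> Comp C g f \<in> Cof) \<and>
     (\<forall>f g. f \<in> Cof \<and> g \<in> Ar C \<and> Dom C g = Dom C f \<and>
        cofibrant C Cof z (Dom C f) \<and> cofibrant C Cof z (Cod C g) \<longrightarrow>
        (\<exists>i j. is_pushout C f g i j \<and> i \<in> Cof))"

definition fib_class :: "('o,'a) cat \<Rightarrow> 'a set \<Rightarrow> 'o \<Rightarrow> bool" where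
  "fib_class C Fib t \<longleftrightarrow>
     Fib \<subseteq> Ar C \<and> is_terminal C t \<and> fibrant C Fib t t \<and>
     (\<forall>f. is_iso C f \<and> fibrant C Fib t (Cod C f) \<longrightarrow> f \<in> Fib) \<and>
     (\<forall>f g. f \<in> Fib \<and> g \<in> Fib \<and> Cod C f = Dom C g \<longrightarrow> Comp C g f \<in> Fib) \<and>
     (\<forall>f g. f \<in> Fib \<and> g \<in> Ar C \<and> Cod C g = Cod C f \<and>
        fibrant C Fib t (Cod C f) \<and> fibrant C Fib t (Dom C g) \<longrightarrow>
        (\<exists>i j. is_pullback C f g i j \<and> i \<in> Fib))"

definition llp :: "('o,'a) cat \<Rightarrow> 'a \<Rightarrow> 'a \<Rightarrow> bool" where
  "llp C i p \<longleftrightarrow>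
     (\<forall>u v. hom C u (Dom C i) (Dom C p) \<and> hom C v (Cod C i) (Cod C p) \<and>
        Comp C p u = Comp C v i \<longrightarrow>
        (\<exists>h. hom C h (Cod C i) (Dom C p) \<and> Comp C h i = u \<and> Comp C p h = v))"

definition acyclic_fib :: "('o,'a) cat \<Rightarrow> 'a set \<Rightarrow> 'a set \<Rightarrow> 'o \<Rightarrow> 'a \<Rightarrow> bool" where
  "acyclic_fib C Cof Fib z p \<longleftrightarrow> p \<in> Fib \<and>
     (\<forall>i\<in>Cof. cofibrant C Cof z (Dom C i) \<and> cofibrant C Cof z (Cod C i) \<longrightarrow> llp C i p)"

definition acyclic_cof :: "('o,'a) cat \<Rightarrow> 'a set \<Rightarrow> 'a set \<Rightarrow> 'o \<Rightarrow> 'a \<Rightarrow> bool" where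
  "acyclic_cof C Cof Fib t i \<longleftrightarrow> i \<in> Cof \<and>
     (\<forall>p\<in>Fib. fibrant C Fib t (Dom C p) \<and> fibrant C Fib t (Cod C p) \<longrightarrow> llp C i p)"

text \<open>Relative cylinder object for a cofibration i : A \<rightarrow> B: a pushout B \<sqcup>_A B with
  inclusions in1, in2, and a factorization B \<sqcup>_A B --c--> I --s--> B of the codiagonal
  (s c in1 = id, s c in2 = id), c a cofibration and c in1 an acyclic cofibration.\<close>
definition has_rel_cylinder :: "('o,'a) cat \<Rightarrow> 'a set \<Rightarrow> 'a set \<Rightarrow> 'o \<Rightarrow> 'a \<Rightarrow> bool" where
  "has_rel_cylinder C Cof Fib t i \<longleftrightarrow>
     (\<exists>in1 in2 c s. is_pushout C i i in1 in2 \<and>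
        c \<in> Cof \<and> Dom C c = Cod C in1 \<and> hom C s (Cod C c) (Cod C i) \<and>
        Comp C s (Comp C c in1) = Idn C (Cod C i) \<and>
        Comp C s (Comp C c in2) = Idn C (Cod C i) \<and>
        acyclic_cof C Cof Fib t (Comp C c in1))"

end

theory Submission
  imports Defs
begin

(* (i) gives (ii) with F the class of all acyclic fibrations. Given (ii), factor the codiagonal
   B \<squnion>\<^sub>A B \<rightarrow> B as a cofibration c followed by some q \<in> F: then c \<circ> in1 is a cofibration
   out of the bifibrant object B with retraction q, hence acyclic, so c is a relative cylinder.
   Conversely, let i be a section of an acyclic fibration p, with B bifibrant. Lifting in the
   square formed by the cylinder's c and p gives H : I \<rightarrow> B with H c in1 = i p and H c in2 = id,
   which exhibits i as a retract of the acyclic cofibration c \<circ> in1; left lifting properties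
   pass to retracts. *)

lemma ar_hom: "f \<in> Ar C \<Longrightarrow> hom C f (Dom C f) (Cod C f)"
  unfolding hom_def by simp

lemma pushout_square:
  assumes "is_pushout C f g i j"
  shows "hom C f (Dom C f) (Cod C f)" "hom C g (Dom C f) (Cod C g)"
    "hom C i (Cod C g) (Cod C i)" "hom C j (Cod C f) (Cod C i)" "Comp C i g = Comp C j f"
  using assms unfolding is_pushout_def hom_def by auto

lemma pushout_universal:
  assumes "is_pushout C f g i j" "hom C u (Cod C g) Q" "hom C v (Cod C f) Q"
    "Comp C u g = Comp C v f"
  obtains w where "hom C w (Cod C i) Q" "Comp C w i = u" "Comp C w j = v"
  using assms unfolding is_pushout_def by blast

definition is_retract :: "('o,'a) cat \<Rightarrow> 'a \<Rightarrow> 'a \<Rightarrow> bool" where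
  "is_retract C i j \<longleftrightarrow> i \<in> Ar C \<and> j \<in> Ar C \<and>
     (\<exists>a b a' b'. hom C a (Dom C i) (Dom C j) \<and> hom C b (Dom C j) (Dom C i) \<and>
        hom C a' (Cod C i) (Cod C j) \<and> hom C b' (Cod C j) (Cod C i) \<and>
        Comp C b a = Idn C (Dom C i) \<and> Comp C b' a' = Idn C (Cod C i) \<and>
        Comp C j a = Comp C a' i \<and> Comp C i b = Comp C b' j)"

lemma is_retractI:
  assumes "hom C i X Y" "hom C j X' Y'" "hom C a X X'" "hom C b X' X" "hom C a' Y Y'" "hom C b' Y' Y"
    and "Comp C b a = Idn C X" "Comp C b' a' = Idn C Y"
    and "Comp C j a = Comp C a' i" "Comp C i b = Comp C b' j"
  shows "is_retract C i j"
proof -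
  have "i \<in> Ar C" "j \<in> Ar C" "X = Dom C i" "Y = Cod C i" "X' = Dom C j" "Y' = Cod C j"
    using assms(1,2) unfolding hom_def by auto
  then show ?thesis
    using assms unfolding is_retract_def by blast
qed

locale category =
  fixes C :: "('o,'a) cat"
  assumes is_category: "is_category C"
begin

lemma hom_objects: "hom C f X Y \<Longrightarrow> X \<in> Ob C \<and> Y \<in> Ob C"
proof -
  have "\<forall>f\<in>Ar C. Dom C f \<in> Ob C \<and> Cod C f \<in> Ob C"
    using is_category unfolding is_category_def by blast
  then show "hom C f X Y \<Longrightarrow> X \<in> Ob C \<and> Y \<in> Ob C" unfolding hom_def by auto
qed

lemma hom_Idn: "X \<in> Ob C \<Longrightarrow> hom C (Idn C X) X X"
  using is_category unfolding is_category_def by blast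

lemma hom_comp:
  assumes "hom C f X Y" "hom C g Y Z"
  shows "hom C (Comp C g f) X Z"
proof -
  have "\<forall>f g. f \<in> Ar C \<and> g \<in> Ar C \<and> Cod C f = Dom C g \<longrightarrow>
      hom C (Comp C g f) (Dom C f) (Cod C g)"
    using is_category unfolding is_category_def by blast
  then show ?thesis using assms unfolding hom_def by auto
qed

lemma comp_assoc:
  assumes "hom C f X Y" "hom C g Y Z" "hom C h Z W"
  shows "Comp C h (Comp C g f) = Comp C (Comp C h g) f"
proof -
  have "\<forall>f g h. f \<in> Ar C \<and> g \<in> Ar C \<and> h \<in> Ar C \<and> Cod C f = Dom C g \<and> Cod C g = Dom C h \<longrightarrow>
      Comp C h (Comp C g f) = Comp C (Comp C h g) f"
    using is_category unfolding is_category_def by blast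
  then show ?thesis using assms unfolding hom_def by auto
qed

lemma
  assumes "hom C f X Y"
  shows comp_Idn_right: "Comp C f (Idn C X) = f" and comp_Idn_left: "Comp C (Idn C Y) f = f"
proof -
  have "\<forall>f\<in>Ar C. Comp C f (Idn C (Dom C f)) = f \<and> Comp C (Idn C (Cod C f)) f = f"
    using is_category unfolding is_category_def by blast
  then show "Comp C f (Idn C X) = f" "Comp C (Idn C Y) f = f" using assms unfolding hom_def by auto
qed

lemma the_from_hom: "is_initial C z \<Longrightarrow> X \<in> Ob C \<Longrightarrow> hom C (the_from C z X) z X"
  unfolding is_initial_def the_from_def by (metis theI')

lemma the_from_unique: "is_initial C z \<Longrightarrow> hom C f z X \<Longrightarrow> f = the_from C z X"
  unfolding is_initial_def the_from_def by (metis hom_objects the_equality)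

lemma the_to_hom: "is_terminal C t \<Longrightarrow> X \<in> Ob C \<Longrightarrow> hom C (the_to C t X) X t"
  unfolding is_terminal_def the_to_def by (metis theI')

lemma the_to_unique: "is_terminal C t \<Longrightarrow> hom C f X t \<Longrightarrow> f = the_to C t X"
  unfolding is_terminal_def the_to_def by (metis hom_objects the_equality)

lemma pushout_eqI:
  assumes P: "is_pushout C f g i j" and "hom C w1 (Cod C i) Q" "hom C w2 (Cod C i) Q"
    and "Comp C w1 i = Comp C w2 i" "Comp C w1 j = Comp C w2 j"
  shows "w1 = w2"
proof -
  note sq = pushout_square[OF P]
  have "Comp C (Comp C w1 i) g = Comp C (Comp C w1 j) f"
    using comp_assoc[OF sq(2) sq(3) assms(2)] comp_assoc[OF sq(1) sq(4) assms(2)] sq(5) by metis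
  then have "\<exists>!w. hom C w (Cod C i) Q \<and> Comp C w i = Comp C w1 i \<and> Comp C w j = Comp C w1 j"
    using P hom_comp[OF sq(3) assms(2)] hom_comp[OF sq(4) assms(2)] unfolding is_pushout_def by blast
  then show ?thesis using assms by metis
qed

lemma pushouts_isomorphic:
  assumes P: "is_pushout C f g i j" and P': "is_pushout C f g i' j'"
  obtains w where "hom C w (Cod C i') (Cod C i)" "is_iso C w"
proof -
  note sq = pushout_square[OF P] and sq' = pushout_square[OF P']
  obtain w where w: "hom C w (Cod C i') (Cod C i)" "Comp C w i' = i" "Comp C w j' = j"
    using pushout_universal[OF P' sq(3) sq(4) sq(5)] by blast
  obtain w' where w': "hom C w' (Cod C i) (Cod C i')" "Comp C w' i = i'" "Comp C w' j = j'"
    using pushout_universal[OF P sq'(3) sq'(4) sq'(5)] by blast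
  have obs: "Cod C i \<in> Ob C" "Cod C i' \<in> Ob C"
    using hom_objects[OF w(1)] by auto
  have "Comp C w' w = Idn C (Cod C i')"
    by (rule pushout_eqI[OF P' hom_comp[OF w(1) w'(1)] hom_Idn[OF obs(2)]])
      (metis comp_assoc[OF sq'(3) w(1) w'(1)] comp_assoc[OF sq'(4) w(1) w'(1)]
        comp_Idn_left[OF sq'(3)] comp_Idn_left[OF sq'(4)] w w')+
  moreover have "Comp C w w' = Idn C (Cod C i)"
    by (rule pushout_eqI[OF P hom_comp[OF w'(1) w(1)] hom_Idn[OF obs(1)]])
      (metis comp_assoc[OF sq(3) w'(1) w(1)] comp_assoc[OF sq(4) w'(1) w(1)]
        comp_Idn_left[OF sq(3)] comp_Idn_left[OF sq(4)] w w')+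
  ultimately have "is_iso C w"
    using w(1) w'(1) unfolding is_iso_def hom_def by auto
  with w(1) show thesis by (rule that)
qed

lemma llp_retract:
  assumes "is_retract C i j" and "llp C j r" and r: "r \<in> Ar C"
  shows "llp C i r"
  unfolding llp_def
proof (intro allI impI)
  fix u v
  assume "hom C u (Dom C i) (Dom C r) \<and> hom C v (Cod C i) (Cod C r) \<and> Comp C r u = Comp C v i"
  then have u: "hom C u (Dom C i) (Dom C r)" and v: "hom C v (Cod C i) (Cod C r)"
    and ruv: "Comp C r u = Comp C v i" by auto
  obtain a b a' b' where a: "hom C a (Dom C i) (Dom C j)" and b: "hom C b (Dom C j) (Dom C i)"
    and a': "hom C a' (Cod C i) (Cod C j)" and b': "hom C b' (Cod C j) (Cod C i)"
    and ba: "Comp C b a = Idn C (Dom C i)" and ba': "Comp C b' a' = Idn C (Cod C i)"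
    and ja: "Comp C j a = Comp C a' i" and ib: "Comp C i b = Comp C b' j"
    using assms(1) unfolding is_retract_def by blast
  have i: "hom C i (Dom C i) (Cod C i)" and j: "hom C j (Dom C j) (Cod C j)"
    and hr: "hom C r (Dom C r) (Cod C r)"
    using assms(1) r unfolding is_retract_def hom_def by auto
  have "Comp C r (Comp C u b) = Comp C (Comp C v b') j"
    by (metis comp_assoc[OF b u hr] comp_assoc[OF b i v] comp_assoc[OF j b' v] ruv ib)
  then obtain h where h: "hom C h (Cod C j) (Dom C r)"
    and hj: "Comp C h j = Comp C u b" and rh: "Comp C r h = Comp C v b'"
    using assms(2) hom_comp[OF b u] hom_comp[OF b' v] j unfolding llp_def hom_def by blast
  have "Comp C (Comp C h a') i = u"
    by (metis comp_assoc[OF i a' h] comp_assoc[OF a j h] comp_assoc[OF a b u] ja hj ba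
        comp_Idn_right[OF u])
  moreover have "Comp C r (Comp C h a') = v"
    by (metis comp_assoc[OF a' h hr] comp_assoc[OF a' b' v] rh ba' comp_Idn_right[OF v])
  ultimately show "\<exists>h. hom C h (Cod C i) (Dom C r) \<and> Comp C h i = u \<and> Comp C r h = v"
    using hom_comp[OF a' h] by blast
qed

end

locale category_with_cofibrations = category C for C :: "('o,'a) cat" +
  fixes Cof :: "'a set" and z :: 'o
  assumes cofib_class: "cofib_class C Cof z"
begin

lemma cof_ar: "i \<in> Cof \<Longrightarrow> i \<in> Ar C"
  using cofib_class unfolding cofib_class_def by blast

lemma cof_comp: "f \<in> Cof \<Longrightarrow> g \<in> Cof \<Longrightarrow> Cod C f = Dom C g \<Longrightarrow> Comp C g f \<in> Cof"
  using cofib_class unfolding cofib_class_def by blast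

lemma iso_cof: "is_iso C f \<Longrightarrow> cofibrant C Cof z (Dom C f) \<Longrightarrow> f \<in> Cof"
  using cofib_class unfolding cofib_class_def by blast

lemma cof_pushout_exists:
  assumes "f \<in> Cof" "g \<in> Ar C" "Dom C g = Dom C f"
    and "cofibrant C Cof z (Dom C f)" "cofibrant C Cof z (Cod C g)"
  obtains i j where "is_pushout C f g i j" "i \<in> Cof"
  using cofib_class assms unfolding cofib_class_def by blast

lemma cofibrant_Cod:
  assumes i: "i \<in> Cof" and A: "cofibrant C Cof z (Dom C i)"
  shows "cofibrant C Cof z (Cod C i)"
proof -
  have initial: "is_initial C z"
    using cofib_class unfolding cofib_class_def by blast
  have hi: "hom C i (Dom C i) (Cod C i)"
    using cof_ar[OF i] by (rule ar_hom)
  have h0: "hom C (the_from C z (Dom C i)) z (Dom C i)"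
    using the_from_hom[OF initial] hom_objects[OF hi] by blast
  have "Comp C i (the_from C z (Dom C i)) \<in> Cof"
    using cof_comp A h0 i unfolding cofibrant_def hom_def by simp
  moreover have "Comp C i (the_from C z (Dom C i)) = the_from C z (Cod C i)"
    using the_from_unique[OF initial hom_comp[OF h0 hi]] .
  ultimately show ?thesis
    using hom_objects[OF hi] unfolding cofibrant_def by simp
qed

lemma cofibrant_pushout:
  assumes P: "is_pushout C f g i j" and f: "f \<in> Cof"
    and "cofibrant C Cof z (Dom C f)" and D: "cofibrant C Cof z (Cod C g)"
  shows "cofibrant C Cof z (Cod C i)"
proof -
  note sq = pushout_square[OF P]
  obtain i' j' where P': "is_pushout C f g i' j'" and i': "i' \<in> Cof"
    using cof_pushout_exists assms sq(2) unfolding hom_def by blast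
  have "Dom C i' = Cod C g"
    using pushout_square(3)[OF P'] unfolding hom_def by simp
  then have P'_cofibrant: "cofibrant C Cof z (Cod C i')"
    using cofibrant_Cod[OF i'] D by simp
  obtain w where w: "hom C w (Cod C i') (Cod C i)" and "is_iso C w"
    using pushouts_isomorphic[OF P P'] .
  then have "w \<in> Cof"
    using iso_cof P'_cofibrant w unfolding hom_def by simp
  then show ?thesis
    using cofibrant_Cod[of w] P'_cofibrant w unfolding hom_def by simp
qed

end

locale category_with_fibrations = category C for C :: "('o,'a) cat" +
  fixes Fib :: "'a set" and t :: 'o
  assumes fib_class: "fib_class C Fib t"
begin

lemma fib_ar: "p \<in> Fib \<Longrightarrow> p \<in> Ar C"
  using fib_class unfolding fib_class_def by blast

lemma fib_comp: "f \<in> Fib \<Longrightarrow> g \<in> Fib \<Longrightarrow> Cod C f = Dom C g \<Longrightarrow> Comp C g f \<in> Fib"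
  using fib_class unfolding fib_class_def by blast

lemma fibrant_Dom:
  assumes p: "p \<in> Fib" and B: "fibrant C Fib t (Cod C p)"
  shows "fibrant C Fib t (Dom C p)"
proof -
  have terminal: "is_terminal C t"
    using fib_class unfolding fib_class_def by blast
  have hp: "hom C p (Dom C p) (Cod C p)"
    using fib_ar[OF p] by (rule ar_hom)
  have h1: "hom C (the_to C t (Cod C p)) (Cod C p) t"
    using the_to_hom[OF terminal] hom_objects[OF hp] by blast
  have "Comp C (the_to C t (Cod C p)) p \<in> Fib"
    using fib_comp B h1 p unfolding fibrant_def hom_def by simp
  moreover have "Comp C (the_to C t (Cod C p)) p = the_to C t (Dom C p)"
    using the_to_unique[OF terminal hom_comp[OF hp h1]] .
  ultimately show ?thesis
    using hom_objects[OF hp] unfolding fibrant_def by simp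
qed

end

locale cof_fib_category =
  category_with_cofibrations C Cof z + category_with_fibrations C Fib t
  for C :: "('o,'a) cat" and Cof z Fib t
begin

definition has_cof_factorizations :: "'a set \<Rightarrow> bool" where
  "has_cof_factorizations F \<longleftrightarrow>
     (\<forall>f\<in>Ar C. cofibrant C Cof z (Dom C f) \<and> fibrant C Fib t (Cod C f) \<longrightarrow>
        (\<exists>i p. i \<in> Cof \<and> p \<in> F \<and> Cod C i = Dom C p \<and> f = Comp C p i))"

definition sections_acyclic :: "'a set \<Rightarrow> bool" where
  "sections_acyclic F \<longleftrightarrow>
     (\<forall>A i p. cofibrant C Cof z A \<and> fibrant C Fib t A \<and> i \<in> Cof \<and> p \<in> F \<and>
        Dom C i = A \<and> Cod C i = Dom C p \<and> Cod C p = A \<and> Comp C p i = Idn C A \<longrightarrow>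
        acyclic_cof C Cof Fib t i)"

lemma acyclic_cof_retract:
  "i \<in> Cof \<Longrightarrow> is_retract C i j \<Longrightarrow> acyclic_cof C Cof Fib t j \<Longrightarrow> acyclic_cof C Cof Fib t i"
  unfolding acyclic_cof_def using llp_retract fib_ar by blast

lemma rel_cylinder_if_sections_acyclic:
  assumes F: "F \<subseteq> Ar C" and factor: "has_cof_factorizations F" and sections: "sections_acyclic F"
    and i: "i \<in> Cof" and A: "cofibrant C Cof z (Dom C i)" and B: "fibrant C Fib t (Cod C i)"
  shows "has_rel_cylinder C Cof Fib t i"
proof -
  have B_cofibrant: "cofibrant C Cof z (Cod C i)"
    using cofibrant_Cod[OF i A] .
  obtain in1 in2 where P: "is_pushout C i i in1 in2" and in1: "in1 \<in> Cof"
    using cof_pushout_exists[OF i cof_ar[OF i] refl A B_cofibrant] by blast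
  note sq = pushout_square[OF P]
  have B_Ob: "Cod C i \<in> Ob C"
    using hom_objects[OF sq(1)] by blast
  obtain codiag where codiag: "hom C codiag (Cod C in1) (Cod C i)"
    "Comp C codiag in1 = Idn C (Cod C i)" "Comp C codiag in2 = Idn C (Cod C i)"
    using pushout_universal[OF P hom_Idn[OF B_Ob] hom_Idn[OF B_Ob] refl] by blast
  have "cofibrant C Cof z (Cod C in1)"
    using cofibrant_pushout[OF P i A B_cofibrant] .
  then have "\<exists>c q. c \<in> Cof \<and> q \<in> F \<and> Cod C c = Dom C q \<and> codiag = Comp C q c"
    using factor codiag(1) B unfolding has_cof_factorizations_def hom_def by auto
  then obtain c q where c: "c \<in> Cof" and q: "q \<in> F" and "Cod C c = Dom C q"
    and codiag_eq: "codiag = Comp C q c"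
    by blast
  have "hom C c (Dom C c) (Dom C q)" "hom C q (Dom C q) (Cod C q)"
    using cof_ar[OF c] q F \<open>Cod C c = Dom C q\<close> unfolding hom_def by auto
  then have "hom C codiag (Dom C c) (Cod C q)"
    using hom_comp codiag_eq by simp
  then have hc: "hom C c (Cod C in1) (Dom C q)" and hq: "hom C q (Dom C q) (Cod C i)"
    using codiag(1) \<open>hom C c (Dom C c) (Dom C q)\<close> \<open>hom C q (Dom C q) (Cod C q)\<close>
    unfolding hom_def by auto
  have q_c_in1: "Comp C q (Comp C c in1) = Idn C (Cod C i)"
    using comp_assoc[OF sq(3) hc hq] codiag(2) codiag_eq by simp
  have q_c_in2: "Comp C q (Comp C c in2) = Idn C (Cod C i)"
    using comp_assoc[OF sq(4) hc hq] codiag(3) codiag_eq by simp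
  have "Comp C c in1 \<in> Cof"
    using cof_comp[OF in1 c] hc unfolding hom_def by simp
  then have "acyclic_cof C Cof Fib t (Comp C c in1)"
    using sections[unfolded sections_acyclic_def, rule_format, of "Cod C i" "Comp C c in1" q]
      B_cofibrant B q hom_comp[OF sq(3) hc] hq q_c_in1
    unfolding hom_def by simp
  moreover have "Dom C c = Cod C in1" "hom C q (Cod C c) (Cod C i)"
    using hc hq \<open>Cod C c = Dom C q\<close> unfolding hom_def by auto
  ultimately show ?thesis
    unfolding has_rel_cylinder_def using P c q_c_in1 q_c_in2 by blast
qed

lemma rel_cylinder_homotopy:
  assumes P: "is_pushout C i i in1 in2" and c: "c \<in> Cof" "Dom C c = Cod C in1"
    and s: "hom C s (Cod C c) (Cod C i)"
    and s_c_in1: "Comp C s (Comp C c in1) = Idn C (Cod C i)"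
    and s_c_in2: "Comp C s (Comp C c in2) = Idn C (Cod C i)"
    and i: "i \<in> Cof" and A: "cofibrant C Cof z (Dom C i)"
    and p: "acyclic_fib C Cof Fib z p" and hp: "hom C p (Cod C i) (Dom C i)"
    and p_i: "Comp C p i = Idn C (Dom C i)"
  obtains H where "hom C H (Cod C c) (Cod C i)"
    "Comp C H (Comp C c in1) = Comp C i p" "Comp C H (Comp C c in2) = Idn C (Cod C i)"
proof -
  note sq = pushout_square[OF P]
  have hi: "hom C i (Dom C i) (Cod C i)" using sq(1) .
  have B_Ob: "Cod C i \<in> Ob C"
    using hom_objects[OF hi] by blast
  have hc: "hom C c (Cod C in1) (Cod C c)"
    using cof_ar[OF c(1)] c(2) unfolding hom_def by simp
  have "Comp C (Comp C i p) i = Comp C (Idn C (Cod C i)) i"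
    using comp_assoc[OF hi hp hi] p_i comp_Idn_right[OF hi] comp_Idn_left[OF hi] by simp
  then obtain w where w: "hom C w (Cod C in1) (Cod C i)"
    "Comp C w in1 = Comp C i p" "Comp C w in2 = Idn C (Cod C i)"
    using pushout_universal[OF P hom_comp[OF hp hi] hom_Idn[OF B_Ob]] by blast
  have hps: "hom C (Comp C p s) (Cod C c) (Dom C i)"
    using hom_comp[OF s hp] .
  have square: "Comp C p w = Comp C (Comp C p s) c"
  proof (rule pushout_eqI[OF P hom_comp[OF w(1) hp] hom_comp[OF hc hps]])
    have "Comp C (Comp C p w) in1 = Comp C p (Comp C i p)"
      using comp_assoc[OF sq(3) w(1) hp] w(2) by simp
    also have "\<dots> = p"
      using comp_assoc[OF hp hi hp] p_i comp_Idn_left[OF hp] by simp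
    also have "\<dots> = Comp C (Comp C (Comp C p s) c) in1"
      using comp_assoc[OF hom_comp[OF sq(3) hc] s hp] comp_assoc[OF sq(3) hc hps] s_c_in1
        comp_Idn_right[OF hp] by simp
    finally show "Comp C (Comp C p w) in1 = Comp C (Comp C (Comp C p s) c) in1" .
  next
    have "Comp C (Comp C p w) in2 = p"
      using comp_assoc[OF sq(4) w(1) hp] w(3) comp_Idn_right[OF hp] by simp
    also have "\<dots> = Comp C (Comp C (Comp C p s) c) in2"
      using comp_assoc[OF hom_comp[OF sq(4) hc] s hp] comp_assoc[OF sq(4) hc hps] s_c_in2
        comp_Idn_right[OF hp] by simp
    finally show "Comp C (Comp C p w) in2 = Comp C (Comp C (Comp C p s) c) in2" .
  qed
  have "cofibrant C Cof z (Cod C in1)"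
    using cofibrant_pushout[OF P i A cofibrant_Cod[OF i A]] .
  then have "llp C c p"
    using p c cofibrant_Cod[OF c(1)] unfolding acyclic_fib_def by simp
  then obtain H where H: "hom C H (Cod C c) (Cod C i)" "Comp C H c = w"
    using w(1) hps square hp c(2) unfolding llp_def hom_def by auto
  show thesis
  proof (rule that[OF H(1)])
    show "Comp C H (Comp C c in1) = Comp C i p"
      using comp_assoc[OF sq(3) hc H(1)] H(2) w(2) by simp
    show "Comp C H (Comp C c in2) = Idn C (Cod C i)"
      using comp_assoc[OF sq(4) hc H(1)] H(2) w(3) by simp
  qed
qed

lemma acyclic_cof_if_rel_cylinder:
  assumes cyl: "has_rel_cylinder C Cof Fib t i" and i: "i \<in> Cof" and A: "cofibrant C Cof z (Dom C i)"
    and p: "acyclic_fib C Cof Fib z p" and hp: "hom C p (Cod C i) (Dom C i)"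
    and p_i: "Comp C p i = Idn C (Dom C i)"
  shows "acyclic_cof C Cof Fib t i"
proof -
  obtain in1 in2 c s where P: "is_pushout C i i in1 in2" and c: "c \<in> Cof" "Dom C c = Cod C in1"
    and s: "hom C s (Cod C c) (Cod C i)"
    and "Comp C s (Comp C c in1) = Idn C (Cod C i)" "Comp C s (Comp C c in2) = Idn C (Cod C i)"
    and acyclic: "acyclic_cof C Cof Fib t (Comp C c in1)"
    using cyl unfolding has_rel_cylinder_def by blast
  then obtain H where H: "hom C H (Cod C c) (Cod C i)"
    "Comp C H (Comp C c in1) = Comp C i p" "Comp C H (Comp C c in2) = Idn C (Cod C i)"
    using rel_cylinder_homotopy[OF P c s _ _ i A p hp p_i] by blast
  note sq = pushout_square[OF P]
  have hc1: "hom C (Comp C c in1) (Cod C i) (Cod C c)"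
    using hom_comp[OF sq(3)] cof_ar[OF c(1)] c(2) unfolding hom_def by auto
  have hc2: "hom C (Comp C c in2) (Cod C i) (Cod C c)"
    using hom_comp[OF sq(4)] cof_ar[OF c(1)] c(2) sq(3) unfolding hom_def by auto
  have "Comp C (Comp C c in1) i = Comp C (Comp C c in2) i"
    using sq(5) comp_assoc[OF sq(1) sq(3)] comp_assoc[OF sq(1) sq(4)] cof_ar[OF c(1)] c(2) sq(3)
    unfolding hom_def by auto
  then have "is_retract C i (Comp C c in1)"
    using is_retractI[OF sq(1) hc1 sq(1) hp hc2 H(1)] p_i H(3) H(2) by simp
  then show ?thesis
    using acyclic_cof_retract[OF i _ acyclic] by blast
qed

lemma sections_acyclic_if_rel_cylinders:
  assumes cylinders: "\<forall>i\<in>Cof. cofibrant C Cof z (Dom C i) \<and> fibrant C Fib t (Dom C i) \<and>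
      cofibrant C Cof z (Cod C i) \<and> fibrant C Fib t (Cod C i) \<longrightarrow> has_rel_cylinder C Cof Fib t i"
  shows "sections_acyclic {p. acyclic_fib C Cof Fib z p}"
  unfolding sections_acyclic_def
proof (intro allI impI)
  fix A i p
  assume "cofibrant C Cof z A \<and> fibrant C Fib t A \<and> i \<in> Cof \<and> p \<in> {p. acyclic_fib C Cof Fib z p} \<and>
    Dom C i = A \<and> Cod C i = Dom C p \<and> Cod C p = A \<and> Comp C p i = Idn C A"
  then have A: "cofibrant C Cof z (Dom C i)" "fibrant C Fib t (Dom C i)" and i: "i \<in> Cof"
    and p: "acyclic_fib C Cof Fib z p" "Cod C i = Dom C p" "Cod C p = Dom C i"
    and p_i: "Comp C p i = Idn C (Dom C i)"
    by auto
  have p_fib: "p \<in> Fib"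
    using p(1) unfolding acyclic_fib_def by blast
  have "has_rel_cylinder C Cof Fib t i"
    using cylinders i A cofibrant_Cod[OF i A(1)] fibrant_Dom[OF p_fib] p by simp
  moreover have "hom C p (Cod C i) (Dom C i)"
    using fib_ar[OF p_fib] p unfolding hom_def by simp
  ultimately show "acyclic_cof C Cof Fib t i"
    using acyclic_cof_if_rel_cylinder[OF _ i A(1) p(1) _ p_i] by blast
qed

end

theorem proposition2p3p2:
  fixes C :: "('o, 'a) cat" and Cof Fib :: "'a set" and z t :: 'o
  assumes cat: "is_category C"
    and cof: "cofib_class C Cof z"
    and fib: "fib_class C Fib t"
    and fact1: "\<forall>f\<in>Ar C. cofibrant C Cof z (Dom C f) \<and> fibrant C Fib t (Cod C f) \<longrightarrow>
                  (\<exists>i p. i \<in> Cof \<and> acyclic_fib C Cof Fib z p \<and> Cod C i = Dom C p \<and> f = Comp C p i)"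
    and fact2: "\<forall>f\<in>Ar C. cofibrant C Cof z (Dom C f) \<and> fibrant C Fib t (Cod C f) \<longrightarrow>
                  (\<exists>i p. acyclic_cof C Cof Fib t i \<and> p \<in> Fib \<and> Cod C i = Dom C p \<and> f = Comp C p i)"
  defines "cond_i \<equiv>
      (\<forall>A i p. cofibrant C Cof z A \<and> fibrant C Fib t A \<and> i \<in> Cof \<and> acyclic_fib C Cof Fib z p \<and>
         Dom C i = A \<and> Cod C i = Dom C p \<and> Cod C p = A \<and> Comp C p i = Idn C A \<longrightarrow>
         acyclic_cof C Cof Fib t i)"
    and "cond_ii \<equiv>
      (\<exists>F. (\<forall>p\<in>F. acyclic_fib C Cof Fib z p) \<and>
         (\<forall>f\<in>Ar C. cofibrant C Cof z (Dom C f) \<and> fibrant C Fib t (Cod C f) \<longrightarrow>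
            (\<exists>i p. i \<in> Cof \<and> p \<in> F \<and> Cod C i = Dom C p \<and> f = Comp C p i)) \<and>
         (\<forall>A i p. cofibrant C Cof z A \<and> fibrant C Fib t A \<and> i \<in> Cof \<and> p \<in> F \<and>
            Dom C i = A \<and> Cod C i = Dom C p \<and> Cod C p = A \<and> Comp C p i = Idn C A \<longrightarrow>
            acyclic_cof C Cof Fib t i))"
    and "cond_iii \<equiv>
      (\<forall>i\<in>Cof. cofibrant C Cof z (Dom C i) \<and> fibrant C Fib t (Cod C i) \<longrightarrow>
         has_rel_cylinder C Cof Fib t i)"
    and "cond_iv \<equiv>
      (\<forall>i\<in>Cof. cofibrant C Cof z (Dom C i) \<and> fibrant C Fib t (Dom C i) \<and>
         cofibrant C Cof z (Cod C i) \<and> fibrant C Fib t (Cod C i) \<longrightarrow>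
         has_rel_cylinder C Cof Fib t i)"
  shows "(cond_i \<longleftrightarrow> cond_ii) \<and> (cond_i \<longleftrightarrow> cond_iii) \<and> (cond_i \<longleftrightarrow> cond_iv)"
proof -
  interpret cof_fib_category C Cof z Fib t
    using cat cof fib by unfold_locales
  let ?AF = "{p. acyclic_fib C Cof Fib z p}"
  have i_iff: "cond_i \<longleftrightarrow> sections_acyclic ?AF"
    unfolding cond_i_def sections_acyclic_def by simp
  have ii_iff: "cond_ii \<longleftrightarrow>
      (\<exists>F. (\<forall>p\<in>F. acyclic_fib C Cof Fib z p) \<and> has_cof_factorizations F \<and> sections_acyclic F)"
    unfolding cond_ii_def has_cof_factorizations_def sections_acyclic_def ..
  have "has_cof_factorizations ?AF"
    using fact1 unfolding has_cof_factorizations_def by simp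
  then have "cond_i \<Longrightarrow> cond_ii"
    using i_iff ii_iff by blast
  moreover have "cond_iii" if "cond_ii"
  proof -
    obtain F where F: "\<forall>p\<in>F. acyclic_fib C Cof Fib z p" "has_cof_factorizations F" "sections_acyclic F"
      using \<open>cond_ii\<close> ii_iff by blast
    moreover have "F \<subseteq> Ar C"
      using F(1) fib_ar unfolding acyclic_fib_def by blast
    ultimately show ?thesis
      unfolding cond_iii_def using rel_cylinder_if_sections_acyclic by blast
  qed
  moreover have "cond_iii \<Longrightarrow> cond_iv"
    unfolding cond_iii_def cond_iv_def by blast
  moreover have "cond_iv \<Longrightarrow> cond_i"
    using sections_acyclic_if_rel_cylinders i_iff unfolding cond_iv_def by blast
  ultimately show ?thesis by blast
qed

end
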